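(* For $n\ge2$, the sets $\widetilde{\mathbb G}_n$ and $\widetilde\Gamma_n$ are both starlike about $(0,\dots,0)$ but neither is circular. Consequently $\widetilde{\mathbb G}_n$ is simply connected.
   Context: $\mathbb D$ is the open unit disc. $\widetilde{\mathbb G}_n=\{(y_1,\dots,y_{n-1},q)\in\mathbb C^n: q\in\mathbb D,\ y_j=\beta_j+\bar\beta_{n-j}q$ for some $\beta_j\in\mathbb C$ with $|\beta_j|+|\beta_{n-j}|<\binom{n}{j}$, $j=1,\dots,n-1\}$; $\widetilde\Gamma_n$ is its closure. A set $S$ is starlike about $z_0\in S$ if for every $z\in S$ the segment from $z_0$ to $z$ lies in $S$. A set $S\subset\mathbb C^n$ is circular if $z\in S$ implies $e^{i\theta}z\in S$ for all $\theta\in[0,2\pi)$. *)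

theory Defs
  imports "HOL-Analysis.Analysis"
begin

text \<open>Points of C^n are encoded as functions x :: nat => complex supported on {1..n}:
  x j = y_j for 1 <= j <= n-1, and x n = q; x k = 0 for k = 0 and k > n.
  The topology is the product topology on nat => complex, whose restriction to
  this n-dimensional coordinate subspace (a closed set) is the Euclidean topology of C^n.\<close>

definition cn_points :: "nat \<Rightarrow> (nat \<Rightarrow> complex) set" where
  "cn_points n = {x. \<forall>k. (k = 0 \<or> k > n) \<longrightarrow> x k = 0}"

definition G_tilde :: "nat \<Rightarrow> (nat \<Rightarrow> complex) set" where
  "G_tilde n = {x \<in> cn_points n. norm (x n) < 1 \<and>
      (\<exists>\<beta> :: nat \<Rightarrow> complex. \<forall>j \<in> {1..n-1}.
          x j = \<beta> j + cnj (\<beta> (n - j)) * x n \<and>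
          norm (\<beta> j) + norm (\<beta> (n - j)) < real (n choose j))}"

definition Gamma_tilde :: "nat \<Rightarrow> (nat \<Rightarrow> complex) set" where
  "Gamma_tilde n = closure (G_tilde n)"

definition cn_origin :: "nat \<Rightarrow> complex" where
  "cn_origin = (\<lambda>k. 0)"

definition starlike_about :: "(nat \<Rightarrow> complex) set \<Rightarrow> (nat \<Rightarrow> complex) \<Rightarrow> bool" where
  "starlike_about S z0 \<longleftrightarrow> z0 \<in> S \<and>
     (\<forall>z \<in> S. \<forall>t::real. 0 \<le> t \<and> t \<le> 1 \<longrightarrow> (\<lambda>k. (1 - t) * z0 k + t * z k) \<in> S)"

definition circular :: "(nat \<Rightarrow> complex) set \<Rightarrow> bool" where
  "circular S \<longleftrightarrow> (\<forall>z \<in> S. \<forall>\<theta>::real. 0 \<le> \<theta> \<and> \<theta> < 2 * pi \<longrightarrow>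
       (\<lambda>k. exp (\<i> * \<theta>) * z k) \<in> S)"

end

theory Submission imports Defs begin

text \<open>For fixed q in the disc, the pair of equations y_j = \<beta>_j + cnj \<beta>_(n-j) q,
  y_(n-j) = \<beta>_(n-j) + cnj \<beta>_j q has the unique solution
  \<beta>_j = (y_j - cnj y_(n-j) q) / (1 - |q|^2). Expressing the coefficients of t x in this way
  through those of x shows that |\<beta>_j| + |\<beta>_(n-j)| does not increase under x \<mapsto> t x for
  0 \<le> t \<le> 1. So both sets are closed under these contractions, which makes them starlike
  about 0 and contracts every loop in the open set to the origin. On the other hand
  y_1 - cnj y_(n-1) q = \<beta>_1 (1 - |q|^2) has modulus at most n (1 - |q|^2) on the closure,
  and this bound fails for -x at a suitable point x with q = 3/4, so the rotation by \<pi>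
  leaves both sets.\<close>

definition solve_coeff :: "complex \<Rightarrow> complex \<Rightarrow> complex \<Rightarrow> complex" where
  "solve_coeff a b q = (a - cnj b * q) / of_real (1 - cmod q ^ 2)"

lemma solve_coeff_eq:
  assumes "cmod q < 1"
  shows "a = solve_coeff a b q + cnj (solve_coeff b a q) * q"
proof -
  have "cmod q ^ 2 < 1"
    using assms by (simp add: power_less_one_iff)
  then have D: "complex_of_real (1 - cmod q ^ 2) \<noteq> 0"
    by (simp only: of_real_eq_0_iff)
  have "solve_coeff a b q + cnj (solve_coeff b a q) * q
      = ((a - cnj b * q) + (cnj b - a * cnj q) * q) / of_real (1 - cmod q ^ 2)"
    by (simp add: solve_coeff_def add_divide_distrib)
  also have "(a - cnj b * q) + (cnj b - a * cnj q) * q = a * of_real (1 - cmod q ^ 2)"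
    by (simp add: algebra_simps) (metis complex_norm_square of_real_power)
  finally show ?thesis unfolding nonzero_mult_div_cancel_right[OF D] by (rule sym)
qed

lemma scaled_coeff_numerator_eq:
  fixes u v q :: complex and t :: real
  shows "of_real t * (u + cnj v * q) - cnj (of_real t * (v + cnj u * q)) * (of_real t * q)
      = of_real (t * (1 - t * cmod q ^ 2)) * u + of_real (t * (1 - t)) * (cnj v * q)"
proof -
  have "q * cnj q = of_real (cmod q ^ 2)" "cnj q * q = of_real (cmod q ^ 2)"
    by (metis complex_norm_square, metis complex_norm_square mult.commute)
  then show ?thesis by (simp add: algebra_simps)
qed

lemma norm_solve_coeff_scaled_le:
  fixes u v q :: complex and t :: real
  assumes q: "cmod q < 1" and t: "0 \<le> t" "t \<le> 1"
  defines "a \<equiv> of_real t * (u + cnj v * q)" and "b \<equiv> of_real t * (v + cnj u * q)"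
  shows "cmod (solve_coeff a b (of_real t * q)) + cmod (solve_coeff b a (of_real t * q))
      \<le> cmod u + cmod v"
proof -
  define r where "r = cmod q"
  have r: "0 \<le> r" "r < 1" using q by (auto simp: r_def)
  have coeff1_nonneg: "0 \<le> t * (1 - t * r\<^sup>2)"
    using t r by (simp add: mult_le_one power_le_one)
  have coeff2_nonneg: "0 \<le> t * (1 - t)" using t by simp
  have numerator_le: "cmod (of_real (t * (1 - t * r\<^sup>2)) * w + of_real (t * (1 - t)) * (cnj w' * q))
      \<le> t * (1 - t * r\<^sup>2) * cmod w + t * (1 - t) * r * cmod w'" for w w'
  proof -
    have "cmod (of_real (t * (1 - t * r\<^sup>2)) * w) = t * (1 - t * r\<^sup>2) * cmod w"
      "cmod (of_real (t * (1 - t)) * (cnj w' * q)) = t * (1 - t) * r * cmod w'"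
      using coeff1_nonneg coeff2_nonneg by (simp_all only: norm_mult norm_of_real complex_mod_cnj abs_of_nonneg r_def mult_ac)
    then show ?thesis by (metis norm_triangle_ineq)
  qed
  define D where "D = 1 - t\<^sup>2 * r\<^sup>2"
  have D_eq: "1 - cmod (of_real t * q) ^ 2 = D"
    using t by (simp add: D_def r_def norm_mult power_mult_distrib)
  have "t * r < 1" using mult_left_le_one_le[of r t] r t by linarith
  then have D_pos: "0 < D"
    using t r by (simp add: D_def power_mult_distrib[symmetric] power_less_one_iff)
  \<comment> \<open>the two numerators together are at most t (1 - t r^2 + (1 - t) r) (|u| + |v|) \<le> D (|u| + |v|)\<close>
  have factor_le: "t * (1 - t * r\<^sup>2) + t * (1 - t) * r \<le> D"
  proof -
    have "D - (t * (1 - t * r\<^sup>2) + t * (1 - t) * r) = (1 - t) * (1 - t * r)"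
      by (simp add: D_def algebra_simps power2_eq_square)
    moreover have "0 \<le> (1 - t) * (1 - t * r)" using t r by (simp add: mult_le_one)
    ultimately show ?thesis by simp
  qed
  have "cmod (a - cnj b * (of_real t * q)) + cmod (b - cnj a * (of_real t * q))
      \<le> (t * (1 - t * r\<^sup>2) + t * (1 - t) * r) * (cmod u + cmod v)"
    using numerator_le[of u v] numerator_le[of v u]
    unfolding a_def b_def scaled_coeff_numerator_eq r_def by (simp add: algebra_simps)
  also have "\<dots> \<le> D * (cmod u + cmod v)"
    using factor_le by (simp add: mult_right_mono)
  finally show ?thesis
    unfolding solve_coeff_def norm_divide D_eq norm_of_real abs_of_pos[OF D_pos]
      add_divide_distrib[symmetric] pos_divide_le_eq[OF D_pos]
    by (simp only: mult.commute)
qed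

definition scaling_closed :: "(nat \<Rightarrow> complex) set \<Rightarrow> bool" where
  "scaling_closed S \<longleftrightarrow> (\<forall>x \<in> S. \<forall>t::real. 0 \<le> t \<and> t \<le> 1 \<longrightarrow> (\<lambda>k. of_real t * x k) \<in> S)"

lemma scaling_closed_G_tilde: "scaling_closed (G_tilde n)"
  unfolding scaling_closed_def
proof (intro ballI allI impI)
  fix x and t :: real
  assume x: "x \<in> G_tilde n" and t: "0 \<le> t \<and> t \<le> 1"
  from x obtain \<beta> where xc: "x \<in> cn_points n" and q: "cmod (x n) < 1"
    and \<beta>: "\<forall>j\<in>{1..n-1}. x j = \<beta> j + cnj (\<beta> (n-j)) * x n \<and>
          cmod (\<beta> j) + cmod (\<beta> (n-j)) < real (n choose j)"
    unfolding G_tilde_def by blast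
  define y where "y = (\<lambda>k. complex_of_real t * x k)"
  define s where "s = y n"
  have s: "cmod s < 1"
    using t q mult_left_le_one_le[of "cmod (x n)" t] by (simp add: s_def y_def norm_mult)
  have "y j = solve_coeff (y j) (y (n-j)) s + cnj (solve_coeff (y (n-j)) (y j) s) * y n
      \<and> cmod (solve_coeff (y j) (y (n-j)) s) + cmod (solve_coeff (y (n-j)) (y j) s) < real (n choose j)"
    if j: "j \<in> {1..n-1}" for j
  proof
    show "y j = solve_coeff (y j) (y (n-j)) s + cnj (solve_coeff (y (n-j)) (y j) s) * y n"
      using solve_coeff_eq[OF s] by (simp add: s_def)
    have "n - j \<in> {1..n-1}" "n - (n - j) = j" using j by auto
    then have "y j = of_real t * (\<beta> j + cnj (\<beta> (n-j)) * x n)"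
      and "y (n-j) = of_real t * (\<beta> (n-j) + cnj (\<beta> j) * x n)"
      using \<beta> j by (auto simp: y_def)
    then show "cmod (solve_coeff (y j) (y (n-j)) s) + cmod (solve_coeff (y (n-j)) (y j) s) < real (n choose j)"
      using norm_solve_coeff_scaled_le[OF q, of t "\<beta> j" "\<beta> (n-j)"] \<beta> j t
      by (fastforce simp: s_def y_def)
  qed
  moreover have "y \<in> cn_points n" using xc by (simp add: cn_points_def y_def)
  ultimately show "y \<in> G_tilde n"
    using s unfolding G_tilde_def s_def
    by (intro CollectI conjI exI[of _ "\<lambda>j. solve_coeff (y j) (y (n-j)) s"]) (auto simp: s_def)
qed

lemma continuous_on_coordinate [continuous_intros]:
  "continuous_on S (\<lambda>x::nat \<Rightarrow> complex. x i)"
  by (rule continuous_on_subset[OF continuous_on_product_coordinates]) simp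

lemma scaling_closed_closure:
  assumes "scaling_closed S"
  shows "scaling_closed (closure S)"
  unfolding scaling_closed_def
proof (intro ballI allI impI)
  fix z and t :: real
  assume z: "z \<in> closure S" and t: "0 \<le> t \<and> t \<le> 1"
  have "continuous_on (closure S) (\<lambda>x. \<lambda>k. complex_of_real t * x k)"
    by (intro continuous_intros)
  moreover have "(\<lambda>x. \<lambda>k. complex_of_real t * x k) ` S \<subseteq> closure S"
    using assms t closure_subset unfolding scaling_closed_def by blast
  ultimately show "(\<lambda>k. complex_of_real t * z k) \<in> closure S"
    using image_closure_subset[OF _ closed_closure] z by blast
qed

lemma starlike_about_origin_if_scaling_closed:
  assumes "scaling_closed S" and "S \<noteq> {}"
  shows "starlike_about S cn_origin"
proof -
  obtain x where "x \<in> S" using assms(2) by blast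
  then have "(\<lambda>k. complex_of_real 0 * x k) \<in> S"
    using assms(1) unfolding scaling_closed_def by (meson order_refl zero_le_one)
  then have "cn_origin \<in> S" by (simp add: cn_origin_def)
  \<comment> \<open>in starlike_about the bounds 0 \<le> t \<le> 1 are coerced into the partial order on complex\<close>
  with assms(1) show ?thesis
    unfolding starlike_about_def scaling_closed_def cn_origin_def by (simp add: less_eq_complex_def)
qed

lemma simply_connected_if_scaling_closed:
  assumes "scaling_closed S"
  shows "simply_connected S"
proof -
  have contract: "homotopic_loops S p (\<lambda>_. cn_origin)"
    if p: "path p" "path_image p \<subseteq> S" "pathfinish p = pathstart p" for p
    unfolding homotopic_loops
  proof (intro exI conjI)
    define h where "h = (\<lambda>z::real \<times> real. \<lambda>k. complex_of_real (1 - fst z) * p (snd z) k)"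
    have "continuous_on {0..1} (\<lambda>s. p s i)" for i
      using p(1) unfolding path_def by (rule continuous_on_product_then_coordinatewise)
    then have "continuous_on ({0..1} \<times> {0..1}) (\<lambda>z. p (snd z) i)" for i
      by (rule continuous_on_compose2[OF _ continuous_on_snd]) auto
    then show "continuous_on ({0..1} \<times> {0..1}) h"
      unfolding h_def by (intro continuous_intros)
    show "h \<in> {0..1} \<times> {0..1} \<rightarrow> S"
    proof
      fix z :: "real \<times> real" assume "z \<in> {0..1} \<times> {0..1}"
      then have "p (snd z) \<in> S" "0 \<le> 1 - fst z \<and> 1 - fst z \<le> 1"
        using p(2) unfolding path_image_def by auto
      then show "h z \<in> S" using assms unfolding h_def scaling_closed_def by blast
    qed
    show "\<forall>x\<in>{0..1}. h (0, x) = p x" by (simp add: h_def)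
    show "\<forall>x\<in>{0..1}. h (1, x) = cn_origin" by (simp add: h_def cn_origin_def)
    show "\<forall>t\<in>{0..1}. pathfinish (h \<circ> Pair t) = pathstart (h \<circ> Pair t)"
      using p(3) by (simp add: h_def pathfinish_def pathstart_def)
  qed
  show ?thesis
    unfolding simply_connected_def
    by (meson contract homotopic_loops_trans homotopic_loops_sym)
qed

lemma G_tilde_coord_bound:
  assumes x: "x \<in> G_tilde n" and j: "j \<in> {1..n-1}"
  shows "cmod (x j - cnj (x (n-j)) * x n) < real (n choose j) * (1 - cmod (x n) ^ 2)"
proof -
  from x obtain \<beta> where q: "cmod (x n) < 1"
    and \<beta>: "\<forall>j\<in>{1..n-1}. x j = \<beta> j + cnj (\<beta> (n-j)) * x n \<and>
          cmod (\<beta> j) + cmod (\<beta> (n-j)) < real (n choose j)"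
    unfolding G_tilde_def by blast
  have "n - j \<in> {1..n-1}" "n - (n - j) = j" using j by auto
  then have "x j - cnj (x (n-j)) * x n = \<beta> j * (1 - cnj (x n) * x n)"
    using \<beta> j by (simp add: algebra_simps)
  also have "\<dots> = \<beta> j * of_real (1 - cmod (x n) ^ 2)"
    by (metis complex_norm_square mult.commute of_real_1 of_real_diff of_real_power)
  finally have eq: "x j - cnj (x (n-j)) * x n = \<beta> j * of_real (1 - cmod (x n) ^ 2)" .
  have "0 < 1 - cmod (x n) ^ 2" using q by (simp add: power_less_one_iff)
  moreover have "cmod (\<beta> j) + cmod (\<beta> (n-j)) < real (n choose j)"
    using \<beta> j by blast
  then have "cmod (\<beta> j) < real (n choose j)"
    using norm_ge_zero[of "\<beta> (n-j)"] by linarith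
  ultimately show ?thesis unfolding eq norm_mult norm_of_real by simp
qed

lemma Gamma_tilde_coord_bound:
  assumes "x \<in> Gamma_tilde n" and "j \<in> {1..n-1}"
  shows "cmod (x j - cnj (x (n-j)) * x n) \<le> real (n choose j) * (1 - cmod (x n) ^ 2)"
proof -
  let ?B = "{x. cmod (x j - cnj (x (n-j)) * x n) \<le> real (n choose j) * (1 - cmod (x n) ^ 2)}"
  have "closed ?B" by (intro closed_Collect_le continuous_intros)
  moreover have "G_tilde n \<subseteq> ?B"
    using G_tilde_coord_bound[OF _ assms(2)] by (auto intro: less_imp_le)
  ultimately have "Gamma_tilde n \<subseteq> ?B"
    unfolding Gamma_tilde_def by (rule closure_minimal[rotated])
  then show ?thesis using assms(1) by blast
qed

definition G_point :: "nat \<Rightarrow> (nat \<Rightarrow> complex) \<Rightarrow> complex \<Rightarrow> nat \<Rightarrow> complex" where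
  "G_point n \<beta> q k = (if k \<in> {1..n-1} then \<beta> k + cnj (\<beta> (n-k)) * q else if k = n then q else 0)"

lemma G_point_coord:
  "j \<in> {1..n-1} \<Longrightarrow> G_point n \<beta> q j = \<beta> j + cnj (\<beta> (n-j)) * q"
  unfolding G_point_def by (simp only: if_True)

lemma G_point_last:
  assumes "n \<ge> 1"
  shows "G_point n \<beta> q n = q"
proof -
  have "n \<notin> {1..n-1}" using assms by auto
  then show ?thesis unfolding G_point_def by (simp only: if_False) simp
qed

lemma G_point_in_G_tilde:
  assumes "n \<ge> 1" and "cmod q < 1"
    and "\<And>j. j \<in> {1..n-1} \<Longrightarrow> cmod (\<beta> j) + cmod (\<beta> (n-j)) < real (n choose j)"
  shows "G_point n \<beta> q \<in> G_tilde n"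
proof -
  have "G_point n \<beta> q \<in> cn_points n" using assms(1) by (auto simp: cn_points_def G_point_def)
  then show ?thesis
    using assms(2,3) G_point_coord[of _ n \<beta> q]
    unfolding G_tilde_def mem_Collect_eq G_point_last[OF assms(1)] by blast
qed

lemma G_tilde_point_with_negation_outside_Gamma:
  assumes n: "n \<ge> 2"
  shows "\<exists>x \<in> G_tilde n. (\<lambda>k. - x k) \<notin> Gamma_tilde n"
proof -
  define c where "c = real n / 3"
  define \<beta> :: "nat \<Rightarrow> complex" where "\<beta> j = (if j = 1 \<or> j = n - 1 then of_real c else 0)" for j
  define x where "x = G_point n \<beta> (3/4)"
  have "cmod (\<beta> j) + cmod (\<beta> (n-j)) < real (n choose j)" if j: "j \<in> {1..n-1}" for j
  proof (cases "j = 1 \<or> j = n - 1")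
    case True
    then have "n choose j = n" using binomial_symmetric[of 1 n] n by auto
    moreover have "cmod (\<beta> j) = c" "cmod (\<beta> (n-j)) = c" using True j by (auto simp: \<beta>_def c_def)
    ultimately show ?thesis using n by (simp add: c_def)
  next
    case False
    then have "\<beta> j = 0" "\<beta> (n-j) = 0" using j by (auto simp: \<beta>_def)
    moreover have "0 < n choose j" using j by (auto simp: zero_less_binomial_iff)
    ultimately show ?thesis by simp
  qed
  then have "x \<in> G_tilde n"
    unfolding x_def using n by (intro G_point_in_G_tilde) auto
  have "1 \<in> {1..n-1}" "n - 1 \<in> {1..n-1}" "n - (n - 1) = 1" using n by auto
  then have x1: "x 1 = of_real (7 * c / 4)" and xn1: "x (n-1) = x 1" and xn: "x n = 3/4"
    using n by (simp_all add: x_def G_point_coord G_point_last \<beta>_def)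
  have "(- x 1) - cnj (- x (n-1)) * (- x n) = - of_real (49 * c / 16)"
    unfolding xn1 xn x1 by simp
  then have "cmod ((- x 1) - cnj (- x (n-1)) * (- x n)) = 49 * c / 16"
    by (simp add: c_def)
  moreover have "real (n choose 1) * (1 - cmod (- x n) ^ 2) = 21 * c / 16"
    unfolding xn by (simp add: c_def power2_eq_square)
  moreover have "c > 0" using n by (simp add: c_def)
  ultimately have "(\<lambda>k. - x k) \<notin> Gamma_tilde n"
    using Gamma_tilde_coord_bound[of "\<lambda>k. - x k" n 1] \<open>1 \<in> {1..n-1}\<close> by force
  with \<open>x \<in> G_tilde n\<close> show ?thesis by blast
qed

lemma circular_imp_neg_mem:
  assumes "circular S" and "x \<in> S"
  shows "(\<lambda>k. - x k) \<in> S"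
proof -
  have "0 \<le> pi \<and> pi < 2 * pi" using pi_gt_zero by linarith
  then have "(\<lambda>k. exp (\<i> * of_real pi) * x k) \<in> S"
    using assms unfolding circular_def by blast
  then show ?thesis by (simp add: exp_pi_i')
qed

theorem mainTheorem6:
  fixes n :: nat
  assumes "n \<ge> 2"
  shows "starlike_about (G_tilde n) cn_origin \<and> starlike_about (Gamma_tilde n) cn_origin
    \<and> \<not> circular (G_tilde n) \<and> \<not> circular (Gamma_tilde n)
    \<and> simply_connected (G_tilde n)"
proof -
  obtain x where x: "x \<in> G_tilde n" and neg_x: "(\<lambda>k. - x k) \<notin> Gamma_tilde n"
    using G_tilde_point_with_negation_outside_Gamma[OF assms] by blast
  have G_Gamma: "G_tilde n \<subseteq> Gamma_tilde n"
    unfolding Gamma_tilde_def by (rule closure_subset)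
  have "starlike_about (G_tilde n) cn_origin"
    using x by (intro starlike_about_origin_if_scaling_closed scaling_closed_G_tilde) auto
  moreover have "starlike_about (Gamma_tilde n) cn_origin"
    using x G_Gamma unfolding Gamma_tilde_def
    by (intro starlike_about_origin_if_scaling_closed scaling_closed_closure scaling_closed_G_tilde) auto
  moreover have "\<not> circular (G_tilde n)" "\<not> circular (Gamma_tilde n)"
    using circular_imp_neg_mem x neg_x G_Gamma by blast+
  moreover have "simply_connected (G_tilde n)"
    by (rule simply_connected_if_scaling_closed[OF scaling_closed_G_tilde])
  ultimately show ?thesis by blast
qed

end
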